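(* Let $G$ be a finite directed graph with vertex set $V$, edge set $E$ and signed incidence matrix $M$, and let $H\subseteq E$. Suppose that for every $e\in H$ there exists $z_e\in\mathbb Z_{\ge0}^E$ supported in $H$ with $e+z_e\in\operatorname{Row}(M)\cap\mathbb Z^E$. Then there is an ordered partition $V=V_1\sqcup\dots\sqcup V_s$ with respect to which $H$ is a cut subgraph and the orientation of $H$ induced from $G$ is coherent acyclic.
   Context: The signed incidence matrix has rows indexed by vertices and columns by edges, with entry $-1$ if $e$ points away from $v$, $+1$ if $e$ points towards $v$, and $0$ if $e$ is a loop or not incident to $v$; $\mathbb R^E$ has standard basis $\{e\}_{e\in E}$. A subset $H\subseteq E$ is a cut subgraph with respect to an ordered partition $V=V_1\sqcup\dots\sqcup V_s$ if the edges of $H$ are exactly the edges of $G$ whose endpoints lie in different parts. The orientation of $H$ is coherent acyclic (with respect to the partition) if every edge $(u,v)\in H$ has $u\in V_i$, $v\in V_j$ with $i<j$. *)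

theory Defs
  imports Complex_Main
begin

definition digraph :: "'v set \<Rightarrow> 'e set \<Rightarrow> ('e \<Rightarrow> 'v) \<Rightarrow> ('e \<Rightarrow> 'v) \<Rightarrow> bool" where
  "digraph V E tail head \<longleftrightarrow> finite V \<and> finite E \<and> (\<forall>e\<in>E. tail e \<in> V \<and> head e \<in> V)"

definition incidence :: "('e \<Rightarrow> 'v) \<Rightarrow> ('e \<Rightarrow> 'v) \<Rightarrow> 'v \<Rightarrow> 'e \<Rightarrow> real" where
  "incidence tail head v e =
     (if tail e = head e then 0 else if v = tail e then -1 else if v = head e then 1 else 0)"

definition in_row_space :: "'v set \<Rightarrow> 'e set \<Rightarrow> ('e \<Rightarrow> 'v) \<Rightarrow> ('e \<Rightarrow> 'v) \<Rightarrow> ('e \<Rightarrow> real) \<Rightarrow> bool" where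
  "in_row_space V E tail head x \<longleftrightarrow>
     (\<exists>c :: 'v \<Rightarrow> real. \<forall>f\<in>E. x f = (\<Sum>v\<in>V. c v * incidence tail head v f))"

definition integral_vec :: "'e set \<Rightarrow> ('e \<Rightarrow> real) \<Rightarrow> bool" where
  "integral_vec E x \<longleftrightarrow> (\<forall>f\<in>E. x f \<in> \<int>)"

definition basis_vec :: "'e \<Rightarrow> 'e \<Rightarrow> real" where
  "basis_vec e = (\<lambda>f. if f = e then 1 else 0)"

definition ordered_partition :: "'v set \<Rightarrow> 'v set list \<Rightarrow> bool" where
  "ordered_partition V Ps \<longleftrightarrow>
     (\<forall>i<length Ps. Ps ! i \<noteq> {}) \<and>
     (\<forall>i<length Ps. \<forall>j<length Ps. i \<noteq> j \<longrightarrow> Ps ! i \<inter> Ps ! j = {}) \<and>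
     \<Union>(set Ps) = V"

definition cut_subgraph :: "'e set \<Rightarrow> ('e \<Rightarrow> 'v) \<Rightarrow> ('e \<Rightarrow> 'v) \<Rightarrow> 'v set list \<Rightarrow> 'e set \<Rightarrow> bool" where
  "cut_subgraph E tail head Ps H \<longleftrightarrow>
     (\<forall>e\<in>E. e \<in> H \<longleftrightarrow>
        (\<exists>i<length Ps. \<exists>j<length Ps. i \<noteq> j \<and> tail e \<in> Ps ! i \<and> head e \<in> Ps ! j))"

definition coherent_acyclic :: "('e \<Rightarrow> 'v) \<Rightarrow> ('e \<Rightarrow> 'v) \<Rightarrow> 'v set list \<Rightarrow> 'e set \<Rightarrow> bool" where
  "coherent_acyclic tail head Ps H \<longleftrightarrow>
     (\<forall>e\<in>H. \<exists>i<length Ps. \<exists>j<length Ps. i < j \<and> tail e \<in> Ps ! i \<and> head e \<in> Ps ! j)"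

end

theory Submission
  imports Defs
begin

text \<open>A vector of the row space of M is a potential difference: the row combination with
coefficients c takes the value c (head f) - c (tail f) on the edge f. Summing the potentials of
the vectors e + z_e over all e in H gives one potential p on V whose difference along an edge f is
the f-th entry of the sum of these vectors. By nonnegativity of the z_e it is at least 1 on H, and
it vanishes off H because the z_e are supported in H. The level sets of p, listed in increasing
order of p, form the required ordered partition.\<close>

lemma incidence_combination:
  assumes "finite V" "tail f \<in> V" "head f \<in> V"
  shows "(\<Sum>v\<in>V. c v * incidence tail head v f) = c (head f) - c (tail f)"
proof (cases "tail f = head f")
  case False
  have "(\<Sum>v\<in>V. c v * incidence tail head v f)
      = (\<Sum>v\<in>V. (if v = head f then c v else 0) - (if v = tail f then c v else 0))"
    by (rule sum.cong) (auto simp: incidence_def False)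
  also have "\<dots> = c (head f) - c (tail f)"
    by (simp add: sum_subtractf assms)
  finally show ?thesis .
qed (simp add: incidence_def)

lemma in_row_space_potential:
  assumes "digraph V E tail head" "in_row_space V E tail head x"
  obtains c where "\<And>f. f \<in> E \<Longrightarrow> x f = c (head f) - c (tail f)"
proof -
  obtain c where "\<And>f. f \<in> E \<Longrightarrow> x f = (\<Sum>v\<in>V. c v * incidence tail head v f)"
    using assms(2) by (auto simp: in_row_space_def)
  with assms(1) show thesis
    by (intro that[of c]) (simp add: incidence_combination digraph_def)
qed

definition level_partition :: "'v set \<Rightarrow> ('v \<Rightarrow> 'a::linorder) \<Rightarrow> 'v set list" where
  "level_partition V p = map (\<lambda>r. {v\<in>V. p v = r}) (sorted_list_of_set (p ` V))"

lemma sorted_list_of_set_nth_less_iff: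
  assumes "finite A" "i < card A" "j < card A"
  shows "sorted_list_of_set A ! i < sorted_list_of_set A ! j \<longleftrightarrow> i < j"
proof -
  have "sorted_wrt (<) (sorted_list_of_set A)"
    by simp
  then show ?thesis
    using assms sorted_wrt_nth_less[of "(<)" "sorted_list_of_set A"]
    by (metis length_sorted_list_of_set linorder_neqE_nat order_less_asym)
qed

context
  fixes V :: "'v set" and p :: "'v \<Rightarrow> 'a::linorder"
  assumes finite_V: "finite V"
begin

lemma length_level_partition: "length (level_partition V p) = card (p ` V)"
  by (simp add: level_partition_def)

lemma mem_level_partition:
  assumes "i < length (level_partition V p)"
  shows "v \<in> level_partition V p ! i \<longleftrightarrow> v \<in> V \<and> p v = sorted_list_of_set (p ` V) ! i"
  using assms by (simp add: level_partition_def)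

lemma level_partition_block_exists:
  assumes "v \<in> V"
  obtains i where "i < length (level_partition V p)" "v \<in> level_partition V p ! i"
proof -
  have "p v \<in> set (sorted_list_of_set (p ` V))"
    using assms finite_V by simp
  then obtain i where "i < card (p ` V)" "sorted_list_of_set (p ` V) ! i = p v"
    by (auto simp: in_set_conv_nth)
  then show thesis
    using that assms by (simp add: length_level_partition mem_level_partition)
qed

lemma level_partition_index_less_iff:
  assumes "i < length (level_partition V p)" "u \<in> level_partition V p ! i"
    and "j < length (level_partition V p)" "v \<in> level_partition V p ! j"
  shows "p u < p v \<longleftrightarrow> i < j" and "p u = p v \<longleftrightarrow> i = j"
proof -
  have "p u < p v \<longleftrightarrow> i < j"
    if "i < length (level_partition V p)" "u \<in> level_partition V p ! i"
      "j < length (level_partition V p)" "v \<in> level_partition V p ! j"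
    for i j u v
    using that sorted_list_of_set_nth_less_iff[of "p ` V" i j] finite_V
    by (simp add: mem_level_partition length_level_partition)
  from this[OF assms] this[OF assms(3,4,1,2)] show "p u < p v \<longleftrightarrow> i < j" "p u = p v \<longleftrightarrow> i = j"
    by auto
qed

lemma ordered_partition_level_partition: "ordered_partition V (level_partition V p)"
  unfolding ordered_partition_def
proof (intro conjI allI impI)
  fix i assume i: "i < length (level_partition V p)"
  then have "sorted_list_of_set (p ` V) ! i \<in> set (sorted_list_of_set (p ` V))"
    by (intro nth_mem) (simp add: length_level_partition)
  then have "sorted_list_of_set (p ` V) ! i \<in> p ` V"
    using finite_V by simp
  then show "level_partition V p ! i \<noteq> {}"
    using i by (auto simp: mem_level_partition)
next
  fix i j
  assume i: "i < length (level_partition V p)" and j: "j < length (level_partition V p)" and "i \<noteq> j"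
  have "i = j" if "v \<in> level_partition V p ! i" "v \<in> level_partition V p ! j" for v
    using level_partition_index_less_iff(2)[OF i that(1) j that(2)] by simp
  with \<open>i \<noteq> j\<close> show "level_partition V p ! i \<inter> level_partition V p ! j = {}"
    by blast
next
  have "v \<in> \<Union> (set (level_partition V p))" if "v \<in> V" for v
    using level_partition_block_exists[OF that] by (metis UnionI nth_mem)
  then show "\<Union> (set (level_partition V p)) = V"
    by (auto simp: level_partition_def)
qed

end

lemma coherent_acyclic_cut_from_potential:
  fixes p :: "'v \<Rightarrow> 'a::linorder"
  assumes "digraph V E tail head" "H \<subseteq> E"
    and increasing: "\<And>f. f \<in> H \<Longrightarrow> p (tail f) < p (head f)"
    and level: "\<And>f. f \<in> E \<Longrightarrow> f \<notin> H \<Longrightarrow> p (tail f) = p (head f)"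
  shows "\<exists>Ps. ordered_partition V Ps \<and> cut_subgraph E tail head Ps H \<and> coherent_acyclic tail head Ps H"
proof (intro exI conjI)
  let ?Ps = "level_partition V p"
  have finite_V: "finite V" and ends: "\<And>f. f \<in> E \<Longrightarrow> tail f \<in> V \<and> head f \<in> V"
    using assms(1) by (auto simp: digraph_def)
  have blocks: "\<exists>i j. i < length ?Ps \<and> j < length ?Ps \<and> tail f \<in> ?Ps ! i \<and> head f \<in> ?Ps ! j"
    if "f \<in> E" for f
    using level_partition_block_exists[OF finite_V] ends[OF that] by metis
  show "ordered_partition V ?Ps"
    using ordered_partition_level_partition[OF finite_V] .
  show "cut_subgraph E tail head ?Ps H"
    unfolding cut_subgraph_def
  proof
    fix f assume "f \<in> E"
    have "f \<in> H \<longleftrightarrow> p (tail f) \<noteq> p (head f)"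
      using increasing level \<open>f \<in> E\<close> by (metis less_irrefl)
    with blocks[OF \<open>f \<in> E\<close>] show "f \<in> H \<longleftrightarrow>
        (\<exists>i<length ?Ps. \<exists>j<length ?Ps. i \<noteq> j \<and> tail f \<in> ?Ps ! i \<and> head f \<in> ?Ps ! j)"
      using level_partition_index_less_iff(2)[OF finite_V] by metis
  qed
  show "coherent_acyclic tail head ?Ps H"
    unfolding coherent_acyclic_def
    using blocks increasing \<open>H \<subseteq> E\<close> level_partition_index_less_iff(1)[OF finite_V] by blast
qed

theorem mainTheorem20:
  fixes V :: "'v set" and E :: "'e set" and tail head :: "'e \<Rightarrow> 'v" and H :: "'e set"
  assumes "digraph V E tail head"
    and "H \<subseteq> E"
    and "\<forall>e\<in>H. \<exists>z :: 'e \<Rightarrow> real.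
            (\<forall>f\<in>E. z f \<in> \<int> \<and> z f \<ge> 0 \<and> (z f \<noteq> 0 \<longrightarrow> f \<in> H)) \<and>
            in_row_space V E tail head (\<lambda>f. basis_vec e f + z f) \<and>
            integral_vec E (\<lambda>f. basis_vec e f + z f)"
  shows "\<exists>Ps. ordered_partition V Ps \<and> cut_subgraph E tail head Ps H \<and> coherent_acyclic tail head Ps H"
proof -
  have "\<exists>z c. (\<forall>f\<in>E. z f \<ge> 0 \<and> (f \<notin> H \<longrightarrow> z f = 0)) \<and>
           (\<forall>f\<in>E. basis_vec e f + z f = c (head f) - c (tail f))" if "e \<in> H" for e
  proof -
    obtain z where z: "\<forall>f\<in>E. z f \<ge> 0 \<and> (z f \<noteq> 0 \<longrightarrow> f \<in> H)"
      and row: "in_row_space V E tail head (\<lambda>f. basis_vec e f + z f)"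
      using assms(3) \<open>e \<in> H\<close> by blast
    obtain c where "\<And>f. f \<in> E \<Longrightarrow> basis_vec e f + z f = c (head f) - c (tail f)"
      using in_row_space_potential[OF assms(1) row] by blast
    with z show ?thesis
      by blast
  qed
  then obtain z c where z: "\<And>e f. e \<in> H \<Longrightarrow> f \<in> E \<Longrightarrow> z e f \<ge> 0 \<and> (f \<notin> H \<longrightarrow> z e f = 0)"
    and c: "\<And>e f. e \<in> H \<Longrightarrow> f \<in> E \<Longrightarrow> basis_vec e f + z e f = c e (head f) - c e (tail f)"
    by metis
  define p where "p v = (\<Sum>e\<in>H. c e v)" for v
  have finite_H: "finite H"
    using assms(1,2) finite_subset by (auto simp: digraph_def)
  have p_diff: "p (head f) - p (tail f) = (\<Sum>e\<in>H. basis_vec e f + z e f)" if "f \<in> E" for f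
    using c[OF _ that] by (simp add: p_def sum_subtractf)
  show ?thesis
  proof (rule coherent_acyclic_cut_from_potential[OF assms(1,2)])
    fix f assume "f \<in> H"
    with assms(2) have "f \<in> E" by blast
    have "1 \<le> basis_vec f f + z f f"
      using z[OF \<open>f \<in> H\<close> \<open>f \<in> E\<close>] by (simp add: basis_vec_def)
    also have "\<dots> \<le> (\<Sum>e\<in>H. basis_vec e f + z e f)"
      using finite_H \<open>f \<in> H\<close> z \<open>f \<in> E\<close> by (intro member_le_sum) (auto simp: basis_vec_def)
    finally show "p (tail f) < p (head f)"
      using p_diff[OF \<open>f \<in> E\<close>] by linarith
  next
    fix f assume "f \<in> E" "f \<notin> H"
    then have "(\<Sum>e\<in>H. basis_vec e f + z e f) = 0"
      using z by (auto simp: basis_vec_def intro!: sum.neutral)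
    then show "p (tail f) = p (head f)"
      using p_diff[OF \<open>f \<in> E\<close>] by simp
  qed
qed

end
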